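(* Let $a<0$, $I=(a,+\infty)$, and let $V\in C^2(I)$ satisfy $\lim_{u\to a^+}V(u)=h^*>0$, $\lim_{u\to a^+}V'(u)=-\infty$, $V(0)=V'(0)=0$, $V''(0)>0$, $uV'(u)>0$ for all $u\in I\setminus\{0\}$, and $V(u)\to+\infty$ as $u\to+\infty$. Let $\beta>0$ be the point with $V(\beta)=h^*$. Suppose there is $\ell>0$ such that $1-\frac{2V(u)V''(u)}{(V'(u))^2}\ge\ell$ for all sufficiently large $u$, that $u/V'(u)\to+\infty$ as $u\to+\infty$, and that $V''(u)>0$ for all $u>\beta$. Then there exists $\overline h>h^*$ such that the extended period function $T$ is monotone increasing on $(\overline h,+\infty)$.
   Context: For $h\in(0,h^* )$ let $a<u^-(h)<0<u^+(h)$ be the two solutions of $V(u)=h$; for $h\ge h^*$ let $u^+(h)>0$ be the positive solution of $V(u)=h$. Define $T_p(h)=\sqrt2\int_{u^-(h)}^{u^+(h)}\frac{du}{\sqrt{h-V(u)}}$ for $0<h<h^*$ and $T_b(h)=\sqrt2\int_{a}^{u^+(h)}\frac{du}{\sqrt{h-V(u)}}$ for $h\ge h^*$. The extended period function (of the equation $\ddot u+V'(u)=0$) is $T(h)=T_p(h)$ for $0<h<h^*$ and $T(h)=T_b(h)$ for $h\ge h^*$. *)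

theory Defs
  imports "HOL-Analysis.Analysis"
begin

definition u_plus :: "(real \<Rightarrow> real) \<Rightarrow> real \<Rightarrow> real" where
  "u_plus V h = (THE u. 0 < u \<and> V u = h)"

definition u_minus :: "real \<Rightarrow> (real \<Rightarrow> real) \<Rightarrow> real \<Rightarrow> real" where
  "u_minus a V h = (THE u. a < u \<and> u < 0 \<and> V u = h)"

definition T_p :: "real \<Rightarrow> (real \<Rightarrow> real) \<Rightarrow> real \<Rightarrow> real" where
  "T_p a V h = sqrt 2 * integral {u_minus a V h .. u_plus V h} (\<lambda>u. 1 / sqrt (h - V u))"

definition T_b :: "real \<Rightarrow> (real \<Rightarrow> real) \<Rightarrow> real \<Rightarrow> real" where
  "T_b a V h = sqrt 2 * integral {a .. u_plus V h} (\<lambda>u. 1 / sqrt (h - V u))"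

definition ext_period :: "real \<Rightarrow> real \<Rightarrow> (real \<Rightarrow> real) \<Rightarrow> real \<Rightarrow> real" where
  "ext_period a hstar V h = (if h < hstar then T_p a V h else T_b a V h)"

end

theory Submission
  imports Defs
begin

text \<open>Split T_b(h) / sqrt 2 at a point U > 0 beyond which the l-condition holds. On the head
  [a, U] the potential is bounded by M = max h* (V U), so the head integral decreases by at most
  (U - a) ((h1 - M)^(-1/2) - (h2 - M)^(-1/2)) from h1 to h2. On the tail [U, u+(h)] the
  substitution u = u+(h (1 - s^2)) turns the integral into that of 2 G (h (1 - s^2)) / sqrt (1 - s^2)
  over [-rho h, 0], where G v = sqrt v / V'(u+ v). Since
  G' v = G v / (2 v) * (1 - 2 V V'' / V'^2)(u+ v) >= l G v / (2 v), the function G, and with it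
  the tail integral, grows at least like a multiple of ln h, which beats the O(h^(-1/2)) loss on
  the head for large h.\<close>

lemma inverse_sqrt_diff_eq:
  fixes A d :: real
  assumes "A > 0" "d \<ge> 0"
  shows "1 / sqrt A - 1 / sqrt (A + d) = d / (sqrt A * sqrt (A + d) * (sqrt A + sqrt (A + d)))"
proof -
  define p q where "p = sqrt A" and "q = sqrt (A + d)"
  have p: "p > 0" and q: "q > 0" and "p * p = A" "q * q = A + d"
    using assms by (auto simp: p_def q_def)
  then have "(q - p) * (p + q) = d" by (simp add: algebra_simps)
  then have "q - p = d / (p + q)" using p q by (simp add: eq_divide_eq)
  moreover have "1 / p - 1 / q = (q - p) / (p * q)" using p q by (simp add: field_simps)
  ultimately have "1 / p - 1 / q = d / (p * q * (p + q))" by (simp add: mult_ac)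
  then show ?thesis by (simp add: p_def q_def)
qed

lemma inverse_sqrt_diff_mono:
  fixes x y h1 h2 :: real
  assumes "x \<le> y" "y < h1" "h1 \<le> h2"
  shows "1 / sqrt (h1 - x) - 1 / sqrt (h2 - x) \<le> 1 / sqrt (h1 - y) - 1 / sqrt (h2 - y)"
proof -
  define d where "d = h2 - h1"
  define den where "den A = sqrt A * sqrt (A + d) * (sqrt A + sqrt (A + d))" for A
  have d: "d \<ge> 0" using assms by (simp add: d_def)
  have "den (h1 - y) > 0" unfolding den_def using assms d by (intro mult_pos_pos add_pos_pos) auto
  moreover have "den (h1 - y) \<le> den (h1 - x)"
    unfolding den_def using assms d by (intro mult_mono add_mono) auto
  ultimately have "d / den (h1 - x) \<le> d / den (h1 - y)"
    using d by (intro frac_le) auto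
  then show ?thesis
    using inverse_sqrt_diff_eq[of "h1 - x" d] inverse_sqrt_diff_eq[of "h1 - y" d] assms
    by (simp add: d_def den_def)
qed

lemma ln_diff_ge_rel_diff:
  fixes x y :: real
  assumes "0 < x" "x \<le> y"
  shows "(y - x) / y \<le> ln y - ln x"
  using ln_le_minus_one[of "x / y"] assms by (simp add: ln_div field_simps)

lemma inverse_sqrt_diff_le_ln_diff:
  fixes M c L h1 h2 :: real
  assumes M: "M > 0" and c: "c > 0" and L: "L \<ge> 0"
    and h1: "2 * M \<le> h1" "(2 * L / c)^2 \<le> h1 - M" and h12: "h1 \<le> h2"
  shows "L * (1 / sqrt (h1 - M) - 1 / sqrt (h2 - M)) \<le> c * (ln h2 - ln h1)"
proof -
  define d p q where "d = h2 - h1" and "p = sqrt (h1 - M)" and "q = sqrt (h2 - M)"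
  have d: "d \<ge> 0" and p: "p > 0" and "p \<le> q" and h2: "h2 > 0"
    using assms by (auto simp: d_def p_def q_def)
  have "h2 / 2 \<le> q * q" using assms by (simp add: q_def)
  also have "q * q \<le> q * (p + q)" using p \<open>p \<le> q\<close> by simp
  finally have den: "p * (h2 / 2) \<le> p * q * (p + q)"
    using p by (simp add: mult.assoc)
  have "\<bar>2 * L / c\<bar> \<le> p"
    unfolding p_def using real_sqrt_le_mono[OF h1(2)] by simp
  then have Lp: "2 * L / p \<le> c" using p c L by (simp add: field_simps)
  have "L * (1 / p - 1 / q) = L * d / (p * q * (p + q))"
    using inverse_sqrt_diff_eq[of "h1 - M" d] M h1 d by (simp add: p_def q_def d_def)
  also have "\<dots> \<le> L * d / (p * (h2 / 2))"
    using den p \<open>p \<le> q\<close> h2 L d by (intro divide_left_mono mult_nonneg_nonneg mult_pos_pos) auto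
  also have "\<dots> = (2 * L / p) * (d / h2)" using p h2 by (simp add: field_simps)
  also have "\<dots> \<le> c * (d / h2)" using Lp d h2 by (intro mult_right_mono) auto
  also have "\<dots> \<le> c * (ln h2 - ln h1)"
    using ln_diff_ge_rel_diff[of h1 h2] M h1 h12 c by (intro mult_left_mono) (auto simp: d_def)
  finally show ?thesis by (simp add: p_def q_def)
qed

lemma integrable_inverse_sqrt_diff:
  fixes f :: "real \<Rightarrow> real"
  assumes f: "continuous_on {a..b} f" and f_less: "\<And>x. x \<in> {a..b} \<Longrightarrow> f x < h"
  shows "(\<lambda>x. 1 / sqrt (h - f x)) integrable_on {a..b}"
proof (rule integrable_continuous_interval)
  have "sqrt (h - f x) \<noteq> 0" if "x \<in> {a..b}" for x
    using f_less[OF that] by simp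
  then show "continuous_on {a..b} (\<lambda>x. 1 / sqrt (h - f x))"
    by (intro continuous_intros f) auto
qed

lemma integral_inverse_sqrt_diff_le:
  fixes f :: "real \<Rightarrow> real"
  assumes f: "continuous_on {a..b} f" and "a \<le> b"
    and f_le: "\<And>x. x \<in> {a..b} \<Longrightarrow> f x \<le> M" and h: "M < h1" "h1 \<le> h2"
  shows "integral {a..b} (\<lambda>x. 1 / sqrt (h1 - f x)) - integral {a..b} (\<lambda>x. 1 / sqrt (h2 - f x))
           \<le> (b - a) * (1 / sqrt (h1 - M) - 1 / sqrt (h2 - M))"
proof -
  have int: "(\<lambda>x. 1 / sqrt (h - f x)) integrable_on {a..b}" if "M < h" for h
    using f_le that by (intro integrable_inverse_sqrt_diff[OF f]) fastforce
  have "integral {a..b} (\<lambda>x. 1 / sqrt (h1 - f x)) - integral {a..b} (\<lambda>x. 1 / sqrt (h2 - f x))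
      = integral {a..b} (\<lambda>x. 1 / sqrt (h1 - f x) - 1 / sqrt (h2 - f x))"
    using int h by (intro integral_diff[symmetric]) auto
  also have "\<dots> \<le> integral {a..b} (\<lambda>x. 1 / sqrt (h1 - M) - 1 / sqrt (h2 - M))"
    using int h f_le by (intro integral_le integrable_diff inverse_sqrt_diff_mono) auto
  also have "\<dots> = (b - a) * (1 / sqrt (h1 - M) - 1 / sqrt (h2 - M))"
    using \<open>a \<le> b\<close> by simp
  finally show ?thesis .
qed

locale potential_well =
  fixes V V' :: "real \<Rightarrow> real" and a hstar :: real
  assumes a_neg: "a < 0"
    and V_deriv: "\<And>u. a < u \<Longrightarrow> (V has_real_derivative V' u) (at u)"
    and lim_V_a: "(V \<longlongrightarrow> hstar) (at_right a)"
    and V_0: "V 0 = 0"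
    and sign: "\<And>u. a < u \<Longrightarrow> u \<noteq> 0 \<Longrightarrow> u * V' u > 0"
    and V_at_top: "filterlim V at_top at_top"
begin

lemma isCont_V: "a < x \<Longrightarrow> isCont V x"
  using V_deriv DERIV_isCont by blast

lemma V'_pos: "0 < x \<Longrightarrow> V' x > 0"
  using sign[of x] a_neg by (simp add: zero_less_mult_iff)

lemma V'_neg: "a < x \<Longrightarrow> x < 0 \<Longrightarrow> V' x < 0"
  using sign[of x] by (simp add: zero_less_mult_iff)

lemma V_strict_mono: assumes "0 \<le> x" "x < y" shows "V x < V y"
proof (rule DERIV_pos_imp_increasing_open[OF \<open>x < y\<close>])
  show "continuous_on {x..y} V"
    using isCont_V assms a_neg by (intro continuous_at_imp_continuous_on) auto
next
  fix t assume "x < t" "t < y"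
  then show "\<exists>d. DERIV V t :> d \<and> d > 0"
    using V_deriv[of t] V'_pos[of t] assms a_neg by auto
qed

lemma V_strict_antimono: assumes "a < x" "x < y" "y \<le> 0" shows "V y < V x"
proof (rule DERIV_neg_imp_decreasing_open[OF \<open>x < y\<close>])
  show "continuous_on {x..y} V"
    using isCont_V assms by (intro continuous_at_imp_continuous_on) auto
next
  fix t assume "x < t" "t < y"
  then show "\<exists>d. DERIV V t :> d \<and> d < 0"
    using V_deriv[of t] V'_neg[of t] assms by auto
qed

lemma V_pos: "0 < x \<Longrightarrow> 0 < V x"
  using V_strict_mono[of 0 x] V_0 by simp

lemma V_le_hstar: assumes "a < x" "x \<le> 0" shows "V x \<le> hstar"
proof (rule tendsto_lowerbound[OF lim_V_a])
  show "\<forall>\<^sub>F t in at_right a. V x \<le> V t"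
    using eventually_at_right_real[OF \<open>a < x\<close>]
    by eventually_elim (use V_strict_antimono assms in force)
qed simp

lemma ex1_u_plus: assumes "v > 0" shows "\<exists>!u. 0 < u \<and> V u = v"
proof -
  obtain b where b: "\<And>x. x \<ge> b \<Longrightarrow> v \<le> V x"
    using V_at_top unfolding filterlim_at_top eventually_at_top_linorder by blast
  have "\<exists>x\<ge>0. x \<le> max b 1 \<and> V x = v"
    using b[of "max b 1"] isCont_V a_neg V_0 assms by (intro IVT) auto
  then have "\<exists>u>0. V u = v"
    using V_0 assms by (metis less_eq_real_def)
  moreover have "x = y" if "0 < x" "0 < y" "V x = V y" for x y
    using V_strict_mono[of x y] V_strict_mono[of y x] that by (cases x y rule: linorder_cases) auto
  ultimately show ?thesis by blast
qed

lemma
  assumes "v > 0"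
  shows u_plus_pos: "u_plus V v > 0" and V_u_plus: "V (u_plus V v) = v"
  using theI'[OF ex1_u_plus[OF assms]] unfolding u_plus_def by auto

lemma u_plus_V: "x > 0 \<Longrightarrow> u_plus V (V x) = x"
  unfolding u_plus_def by (rule the1_equality[OF ex1_u_plus[OF V_pos]]) auto

lemma u_plus_mono: assumes "0 < v" "v \<le> w" shows "u_plus V v \<le> u_plus V w"
proof (rule ccontr)
  assume "\<not> u_plus V v \<le> u_plus V w"
  then have "V (u_plus V w) < V (u_plus V v)"
    using V_strict_mono u_plus_pos assms by (simp add: less_imp_le)
  then show False using V_u_plus assms by simp
qed

lemma isCont_u_plus: assumes "v > 0" shows "isCont (u_plus V) v"
proof -
  let ?x = "u_plus V v"
  have near_pos: "z > 0" if "\<bar>z - ?x\<bar> \<le> ?x / 2" for z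
    using that u_plus_pos[OF assms] by arith
  have "isCont (u_plus V) (V ?x)"
    by (rule isCont_inverse_function[where d = "?x / 2" and f = V and x = ?x])
      (use u_plus_pos[OF assms] near_pos in \<open>auto intro!: u_plus_V isCont_V less_trans[OF a_neg]\<close>)
  then show ?thesis using V_u_plus[OF assms] by simp
qed

lemma DERIV_u_plus: assumes "v > 0"
  shows "(u_plus V has_real_derivative inverse (V' (u_plus V v))) (at v)"
proof (rule DERIV_inverse_function[where a = 0 and b = "v + 1"])
  show "DERIV V (u_plus V v) :> V' (u_plus V v)"
    using V_deriv u_plus_pos[OF assms] a_neg by simp
  show "V' (u_plus V v) \<noteq> 0" using V'_pos u_plus_pos[OF assms] by force
qed (use assms V_u_plus isCont_u_plus in auto)

text \<open>A version of V that is continuous on the whole line, so that the integrand on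
  \<open>[a, U]\<close> is continuous and measurability comes for free.\<close>

definition V_ext :: "real \<Rightarrow> real" where
  "V_ext x = (if x \<le> a then hstar else V x)"

lemma V_ext_eq: "a < x \<Longrightarrow> V_ext x = V x"
  by (simp add: V_ext_def)

lemma isCont_V_ext: "isCont V_ext x"
proof (cases x a rule: linorder_cases)
  case less
  have "\<forall>\<^sub>F y in nhds x. V_ext y = hstar"
    using eventually_nhds_in_open[of "{..<a}" x] less by (auto simp: V_ext_def elim!: eventually_mono)
  then show ?thesis using isCont_cong by force
next
  case greater
  have "\<forall>\<^sub>F y in nhds x. V_ext y = V y"
    using eventually_nhds_in_open[of "{a<..}" x] greater by (auto simp: V_ext_def elim!: eventually_mono)
  then show ?thesis using isCont_cong isCont_V greater by force
next
  case equal
  have "(V_ext \<longlongrightarrow> hstar) (at_left a)"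
    by (rule tendsto_eventually)
      (auto simp: V_ext_def intro: eventually_mono[OF eventually_at_left_real[of "a - 1" a]])
  moreover have "(V_ext \<longlongrightarrow> hstar) (at_right a)"
    using lim_V_a by (rule Lim_transform_eventually)
      (auto simp: V_ext_def intro: eventually_mono[OF eventually_at_right_less])
  ultimately show ?thesis
    using equal unfolding isCont_def by (simp add: filterlim_split_at_real V_ext_def)
qed

lemma borel_measurable_V_ext [measurable]: "V_ext \<in> borel_measurable borel"
  using isCont_V_ext by (intro borel_measurable_continuous_onI continuous_at_imp_continuous_on) auto

lemma V_ext_le_hstar: "x \<le> 0 \<Longrightarrow> V_ext x \<le> hstar"
  using V_le_hstar by (auto simp: V_ext_def)

end

locale potential_well_tail = potential_well +
  fixes V'' :: "real \<Rightarrow> real" and l U :: real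
  assumes V'_deriv: "\<And>u. a < u \<Longrightarrow> (V' has_real_derivative V'' u) (at u)"
    and l_pos: "l > 0" and U_pos: "U > 0"
    and ell: "\<And>u. U \<le> u \<Longrightarrow> l \<le> 1 - 2 * V u * V'' u / (V' u)^2"
begin

definition hU :: real where "hU = V U"

lemma hU_pos: "hU > 0"
  unfolding hU_def using V_pos U_pos .

lemma u_plus_ge_U: "hU \<le> v \<Longrightarrow> U \<le> u_plus V v"
  using u_plus_mono[OF hU_pos] u_plus_V[OF U_pos] unfolding hU_def by metis

definition G :: "real \<Rightarrow> real" where
  "G v = sqrt v / V' (u_plus V v)"

lemma G_pos: "v > 0 \<Longrightarrow> G v > 0"
  unfolding G_def using V'_pos u_plus_pos by simp

definition G' :: "real \<Rightarrow> real" where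
  "G' v = G v / (2 * v) * (1 - 2 * v * V'' (u_plus V v) / (V' (u_plus V v))^2)"

lemma DERIV_G: assumes "v > 0" shows "(G has_real_derivative G' v) (at v)"
proof -
  define u s where "u = u_plus V v" and "s = sqrt v"
  have u: "u > 0" "V' u > 0" and s: "s > 0" "v = s * s"
    using u_plus_pos[OF assms] V'_pos assms by (auto simp: u_def s_def)
  have "((\<lambda>v. V' (u_plus V v)) has_real_derivative V'' u * inverse (V' u)) (at v)"
    using DERIV_chain2[OF V'_deriv DERIV_u_plus[OF assms]] u a_neg by (simp add: u_def)
  from DERIV_divide[OF DERIV_real_sqrt[OF assms] this]
  have "(G has_real_derivative
          (inverse s / 2 * V' u - s * (V'' u * inverse (V' u))) / (V' u * V' u)) (at v)"
    using u unfolding G_def[abs_def] by (simp add: u_def s_def)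
  moreover have "(inverse s / 2 * V' u - s * (V'' u * inverse (V' u))) / (V' u * V' u) = G' v"
    using u s unfolding G'_def G_def u_def[symmetric] s_def[symmetric]
    by (simp add: field_simps power2_eq_square)
  ultimately show ?thesis by simp
qed

lemma G'_ge: assumes "hU \<le> v" shows "l * G v / (2 * v) \<le> G' v"
proof -
  have v: "v > 0" using assms hU_pos by simp
  have "l \<le> 1 - 2 * v * V'' (u_plus V v) / (V' (u_plus V v))^2"
    using ell[OF u_plus_ge_U[OF assms]] V_u_plus[OF v] by simp
  then have "G v / (2 * v) * l \<le> G' v"
    unfolding G'_def using G_pos[OF v] v by (intro mult_left_mono) auto
  then show ?thesis by (metis mult.commute times_divide_eq_left)
qed

lemma G_mono: assumes "hU \<le> v1" "v1 \<le> v2" shows "G v1 \<le> G v2"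
proof (rule deriv_nonneg_imp_mono[OF DERIV_G])
  fix v assume "v \<in> {v1..v2}"
  then have "hU \<le> v" "v > 0" using assms hU_pos by auto
  moreover from this have "0 \<le> l * G v / (2 * v)" using G_pos[of v] l_pos by simp
  ultimately show "0 \<le> G' v" using G'_ge by (meson order_trans)
qed (use assms hU_pos in auto)

definition cG :: real where "cG = l * G hU / 2"

lemma cG_pos: "cG > 0"
  unfolding cG_def using l_pos G_pos[OF hU_pos] by simp

lemma G_ln_growth:
  assumes "hU \<le> v1" "v1 \<le> v2"
  shows "cG * (ln v2 - ln v1) \<le> G v2 - G v1"
proof -
  have "G v1 - cG * ln v1 \<le> G v2 - cG * ln v2"
  proof (rule deriv_nonneg_imp_mono[where g = "\<lambda>v. G v - cG * ln v"])
    fix v assume "v \<in> {v1..v2}"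
    then have v: "hU \<le> v" "v > 0" using assms hU_pos by auto
    show "((\<lambda>v. G v - cG * ln v) has_real_derivative G' v - cG * inverse v) (at v)"
      by (rule DERIV_diff[OF DERIV_G[OF v(2)] DERIV_cmult[OF DERIV_ln[OF v(2)]]])
    have "cG * inverse v = l * G hU / (2 * v)"
      unfolding cG_def using v by (simp add: field_simps)
    also have "\<dots> \<le> l * G v / (2 * v)"
      using G_mono[OF order.refl v(1)] l_pos v by (intro divide_right_mono mult_left_mono) auto
    finally show "0 \<le> G' v - cG * inverse v" using G'_ge[OF v(1)] by linarith
  qed (use assms in simp)
  then show ?thesis by (simp add: algebra_simps)
qed

definition rho :: "real \<Rightarrow> real" where
  "rho h = sqrt (1 - hU / h)"

definition tail_integrand :: "real \<Rightarrow> real \<Rightarrow> real" where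
  "tail_integrand h s = 2 * G (h * (1 - s^2)) / sqrt (1 - s^2)"

definition tail_integral :: "real \<Rightarrow> real" where
  "tail_integral h = integral {- rho h..0} (tail_integrand h)"

lemma rho_pos: "hU < h \<Longrightarrow> rho h > 0"
  unfolding rho_def using hU_pos by (simp add: field_simps)

lemma tail_level_bounds:
  assumes "hU < h" "s \<in> {- rho h..0}"
  shows "hU \<le> h * (1 - s^2)" "0 < 1 - s^2"
proof -
  have "\<bar>s\<bar> \<le> rho h" using assms(2) by auto
  then have "s^2 \<le> (rho h)^2" by (metis abs_ge_zero power2_abs power_mono)
  also have "(rho h)^2 = 1 - hU / h"
    unfolding rho_def using assms(1) hU_pos by simp
  finally have "h * s^2 \<le> h * (1 - hU / h)"
    using assms(1) hU_pos by (intro mult_left_mono) auto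
  then show level: "hU \<le> h * (1 - s^2)"
    using assms(1) hU_pos by (simp add: algebra_simps)
  then have "0 < h * (1 - s^2)" using hU_pos by linarith
  then show "0 < 1 - s^2"
    using assms(1) hU_pos by (simp add: zero_less_mult_iff)
qed

lemma isCont_G: "v > 0 \<Longrightarrow> isCont G v"
  using DERIV_G DERIV_isCont by blast

lemma isCont_V'_u_plus: "v > 0 \<Longrightarrow> isCont (\<lambda>v. V' (u_plus V v)) v"
  using u_plus_pos[of v] a_neg
  by (intro isCont_o2[OF isCont_u_plus] DERIV_isCont[OF V'_deriv]) auto

lemma continuous_on_tail_integrand:
  assumes "hU < h"
  shows "continuous_on {- rho h..0} (tail_integrand h)"
proof (intro continuous_at_imp_continuous_on ballI)
  fix s assume "s \<in> {- rho h..0}"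
  then have level: "0 < h * (1 - s^2)" and "0 < 1 - s^2"
    using tail_level_bounds[OF assms] hU_pos by force+
  have "isCont (\<lambda>s. G (h * (1 - s^2))) s"
    by (rule isCont_o2[where f = "\<lambda>s. h * (1 - s^2)", OF _ isCont_G[OF level]])
      (intro continuous_intros)
  then show "isCont (tail_integrand h) s"
    unfolding tail_integrand_def[abs_def] using \<open>0 < 1 - s^2\<close> by (intro continuous_intros) auto
qed

lemma tail_integrand_nonneg:
  assumes "hU < h" "s \<in> {- rho h..0}"
  shows "0 \<le> tail_integrand h s"
  using tail_level_bounds[OF assms] G_pos[of "h * (1 - s^2)"] hU_pos
  unfolding tail_integrand_def by simp

definition tail_subst :: "real \<Rightarrow> real \<Rightarrow> real" where
  "tail_subst h s = u_plus V (h * (1 - s^2))"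

lemma tail_subst_pos: "hU < h \<Longrightarrow> s \<in> {- rho h..0} \<Longrightarrow> tail_subst h s > 0"
  unfolding tail_subst_def using tail_level_bounds hU_pos by (intro u_plus_pos) force

lemma tail_subst_ends:
  assumes "hU < h"
  shows "tail_subst h (- rho h) = U" and "tail_subst h 0 = u_plus V h"
proof -
  have "h * (1 - (- rho h)^2) = hU"
    unfolding rho_def using assms hU_pos by (simp add: field_simps)
  then show "tail_subst h (- rho h) = U"
    unfolding tail_subst_def hU_def using u_plus_V[OF U_pos] by simp
qed (simp add: tail_subst_def)

lemma DERIV_tail_subst:
  assumes "hU < h" "s \<in> {- rho h..0}"
  shows "(tail_subst h has_real_derivative - 2 * h * s / V' (tail_subst h s)) (at s)"
proof -
  have "0 < h * (1 - s^2)" using tail_level_bounds[OF assms] hU_pos by force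
  moreover have "((\<lambda>s. h * (1 - s^2)) has_real_derivative - (2 * h * s)) (at s)"
    by (auto intro!: derivative_eq_intros)
  ultimately have "(tail_subst h has_real_derivative inverse (V' (tail_subst h s)) * - (2 * h * s)) (at s)"
    unfolding tail_subst_def[abs_def] by (rule DERIV_chain2[OF DERIV_u_plus])
  moreover have "inverse (V' (tail_subst h s)) * - (2 * h * s) = - 2 * h * s / V' (tail_subst h s)"
    by (simp add: divide_inverse ac_simps)
  ultimately show ?thesis by simp
qed

lemma continuous_on_tail_subst_deriv:
  assumes "hU < h"
  shows "continuous_on {- rho h..0} (\<lambda>s. - 2 * h * s / V' (tail_subst h s))"
proof (intro continuous_at_imp_continuous_on ballI)
  fix s assume s: "s \<in> {- rho h..0}"
  then have "0 < h * (1 - s^2)" using tail_level_bounds[OF assms] hU_pos by force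
  then have "isCont (\<lambda>s. V' (tail_subst h s)) s"
    unfolding tail_subst_def
    by (intro isCont_o2[where f = "\<lambda>s. h * (1 - s^2)", OF _ isCont_V'_u_plus]) (auto intro!: continuous_intros)
  then show "isCont (\<lambda>s. - 2 * h * s / V' (tail_subst h s)) s"
    using V'_pos[OF tail_subst_pos[OF assms s]] by (intro continuous_intros) auto
qed

lemma tail_subst_integrand:
  assumes h: "hU < h" and s: "s \<in> {- rho h..0}" "s \<noteq> 0"
  shows "1 / sqrt (h - V_ext (tail_subst h s)) * (- 2 * h * s / V' (tail_subst h s))
           = tail_integrand h s"
proof -
  have "s < 0" "0 < h" "0 < 1 - s^2" "0 < h * (1 - s^2)"
    using s tail_level_bounds[OF h s(1)] hU_pos h by auto
  moreover have "V' (tail_subst h s) > 0" using V'_pos[OF tail_subst_pos[OF h s(1)]] .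
  moreover have "V_ext (tail_subst h s) = h * (1 - s^2)"
    using V_ext_eq tail_subst_pos[OF h s(1)] a_neg V_u_plus \<open>0 < h * (1 - s^2)\<close>
    unfolding tail_subst_def by simp
  then have "h - V_ext (tail_subst h s) = h * s^2" by (simp add: algebra_simps)
  then have "sqrt (h - V_ext (tail_subst h s)) = sqrt h * (- s)"
    using \<open>s < 0\<close> by (simp add: real_sqrt_mult)
  moreover have "sqrt (h * (1 - s^2)) = sqrt h * sqrt (1 - s^2)" by (simp add: real_sqrt_mult)
  moreover have "sqrt h * sqrt h = h" using \<open>0 < h\<close> by simp
  ultimately show ?thesis
    unfolding tail_integrand_def G_def tail_subst_def[symmetric] by (simp add: field_simps)
qed

text \<open>Substituting in the Lebesgue integral of a nonnegative function requires no prior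
  knowledge that the singular integrand is integrable.\<close>

lemma nn_integral_tail:
  assumes h: "hU < h"
  shows "(\<integral>\<^sup>+x. 1 / sqrt (h - V_ext x) * indicator {U..u_plus V h} x \<partial>lborel)
           = ennreal (tail_integral h)"
proof -
  have meas: "set_borel_measurable borel {c..d} (\<lambda>x. 1 / sqrt (h - V_ext x))" for c d
    unfolding set_borel_measurable_def by measurable
  have deriv_nonneg: "0 \<le> - 2 * h * s / V' (tail_subst h s)" if "s \<in> {- rho h..0}" for s
    using V'_pos[OF tail_subst_pos[OF h that]] that h hU_pos
    by (intro divide_nonneg_pos) (auto simp: mult_nonneg_nonpos)
  have "(\<integral>\<^sup>+x. 1 / sqrt (h - V_ext x) * indicator {U..u_plus V h} x \<partial>lborel)
      = (\<integral>\<^sup>+s. 1 / sqrt (h - V_ext (tail_subst h s)) * (- 2 * h * s / V' (tail_subst h s))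
              * indicator {- rho h..0} s \<partial>lborel)"
    using nn_integral_substitution[OF meas DERIV_tail_subst[OF h] continuous_on_tail_subst_deriv[OF h]
        deriv_nonneg] rho_pos[OF h]
    by (simp add: tail_subst_ends[OF h])
  also have "\<dots> = (\<integral>\<^sup>+s. ennreal (tail_integrand h s) * indicator {- rho h..0} s \<partial>lborel)"
  proof (rule nn_integral_cong_AE)
    show "AE s in lborel. ennreal (1 / sqrt (h - V_ext (tail_subst h s)) * (- 2 * h * s / V' (tail_subst h s))
        * indicator {- rho h..0} s) = ennreal (tail_integrand h s) * indicator {- rho h..0} s"
      using AE_lborel_singleton[of 0]
    proof eventually_elim
      case (elim s)
      then show ?case
        using tail_subst_integrand[OF h, of s] by (cases "s \<in> {- rho h..0}") auto
    qed
  qed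
  also have "\<dots> = ennreal (tail_integral h)"
    unfolding tail_integral_def using tail_integrand_nonneg[OF h] continuous_on_tail_integrand[OF h]
    by (intro nn_integral_has_integral_lebesgue' integrable_integral integrable_continuous_interval) auto
  finally show ?thesis .
qed

lemma has_integral_tail:
  assumes h: "hU < h"
  shows "((\<lambda>x. 1 / sqrt (h - V_ext x)) has_integral tail_integral h) {U..u_plus V h}"
proof -
  have "0 \<le> 1 / sqrt (h - V_ext x)" if x: "x \<in> {U..u_plus V h}" for x
  proof -
    have "x > 0" "0 < h" using x U_pos h hU_pos by auto
    then have "V_ext x \<le> h"
      using x V_ext_eq[of x] a_neg V_u_plus[OF \<open>0 < h\<close>] V_strict_mono[of x "u_plus V h"]
      by (cases "x = u_plus V h") auto
    then show ?thesis by simp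
  qed
  then have nonneg: "0 \<le> 1 / sqrt (h - V_ext x) * indicator {U..u_plus V h} x" for x
    by (simp split: split_indicator)
  have meas: "(\<lambda>x. 1 / sqrt (h - V_ext x) * indicator {U..u_plus V h} x) \<in> borel_measurable borel"
    by measurable
  have "tail_integral h \<ge> 0"
    unfolding tail_integral_def using tail_integrand_nonneg[OF h] continuous_on_tail_integrand[OF h]
    by (intro integral_nonneg integrable_continuous_interval) auto
  then have "((\<lambda>x. 1 / sqrt (h - V_ext x) * indicator {U..u_plus V h} x) has_integral tail_integral h) UNIV"
    by (rule nn_integral_has_integral[OF meas nonneg nn_integral_tail[OF h]])
  also have "(\<lambda>x. 1 / sqrt (h - V_ext x) * indicator {U..u_plus V h} x)
      = (\<lambda>x. if x \<in> {U..u_plus V h} then 1 / sqrt (h - V_ext x) else 0)"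
    by (rule ext) (simp add: indicator_def)
  finally show ?thesis by (rule has_integral_restrict_UNIV[THEN iffD1])
qed

definition hmax :: real where "hmax = max hstar hU"

definition head_integral :: "real \<Rightarrow> real" where
  "head_integral h = integral {a..U} (\<lambda>x. 1 / sqrt (h - V_ext x))"

lemma V_ext_le_hmax: "x \<le> U \<Longrightarrow> V_ext x \<le> hmax"
  using V_ext_le_hstar[of x] V_ext_eq[of x] a_neg V_strict_mono[of x U] unfolding hmax_def hU_def
  by (cases "x \<le> 0"; cases "x = U") auto

lemma head_integral_decrease:
  assumes "hmax < h1" "h1 \<le> h2"
  shows "head_integral h1 - head_integral h2 \<le> (U - a) * (1 / sqrt (h1 - hmax) - 1 / sqrt (h2 - hmax))"
  unfolding head_integral_def using a_neg U_pos V_ext_le_hmax assms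
  by (intro integral_inverse_sqrt_diff_le continuous_at_imp_continuous_on ballI isCont_V_ext) auto

lemma T_b_split:
  assumes h: "hmax < h"
  shows "T_b a V h = sqrt 2 * (head_integral h + tail_integral h)"
proof -
  have "hU < h" using h by (simp add: hmax_def)
  have head: "((\<lambda>x. 1 / sqrt (h - V_ext x)) has_integral head_integral h) {a..U}"
    unfolding head_integral_def using V_ext_le_hmax h
    by (intro integrable_integral integrable_inverse_sqrt_diff continuous_at_imp_continuous_on ballI isCont_V_ext)
      fastforce+
  have "((\<lambda>x. 1 / sqrt (h - V_ext x)) has_integral head_integral h + tail_integral h) {a..u_plus V h}"
    using a_neg U_pos u_plus_ge_U[of h] \<open>hU < h\<close>
    by (intro has_integral_combine[OF _ _ head has_integral_tail]) auto
  then have "((\<lambda>x. 1 / sqrt (h - V x)) has_integral head_integral h + tail_integral h) {a..u_plus V h}"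
    by (rule has_integral_spike[OF negligible_sing[of a], rotated]) (auto simp: V_ext_eq)
  then show ?thesis unfolding T_b_def by (simp add: integral_unique)
qed

lemma tail_integrand_growth:
  assumes "hU < h1" "h1 \<le> h2" "s \<in> {- rho h1..0}"
  shows "tail_integrand h1 s + 2 * cG * (ln h2 - ln h1) \<le> tail_integrand h2 s"
proof -
  define t where "t = 1 - s^2"
  have level: "hU \<le> h1 * t" and t: "0 < t" "sqrt t \<le> 1"
    using tail_level_bounds[OF assms(1,3)] by (auto simp: t_def)
  have "cG * (ln h2 - ln h1) = cG * (ln (h2 * t) - ln (h1 * t))"
    using t assms hU_pos by (simp add: ln_mult)
  also have "\<dots> \<le> G (h2 * t) - G (h1 * t)"
    using level assms t by (intro G_ln_growth) auto
  finally have "2 * cG * (ln h2 - ln h1) \<le> 2 * (G (h2 * t) - G (h1 * t))" by simp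
  also have "\<dots> \<le> 2 * (G (h2 * t) - G (h1 * t)) / sqrt t"
  proof -
    have "0 \<le> 2 * (G (h2 * t) - G (h1 * t))"
      using G_mono[OF level] assms t by (simp add: mult_right_mono)
    then show ?thesis using t by (simp add: le_divide_eq mult_left_le)
  qed
  finally show ?thesis unfolding tail_integrand_def t_def by (simp add: diff_divide_distrib)
qed

lemma tail_integral_growth:
  assumes h1: "2 * hU \<le> h1" and h12: "h1 \<le> h2"
  shows "cG * (ln h2 - ln h1) \<le> tail_integral h2 - tail_integral h1"
proof -
  have hU1: "hU < h1" and hU2: "hU < h2" using assms hU_pos by auto
  define \<delta> where "\<delta> = 2 * cG * (ln h2 - ln h1)"
  have \<delta>: "0 \<le> \<delta>" unfolding \<delta>_def using cG_pos hU1 h12 hU_pos by simp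
  have rho_le: "rho h1 \<le> rho h2"
    unfolding rho_def using hU1 h12 hU_pos by (simp add: frac_le)
  have rho_half: "1 / 2 \<le> rho h1"
  proof -
    have "sqrt (1 / 4) \<le> rho h1"
      unfolding rho_def using h1 hU_pos by (simp add: field_simps)
    then show ?thesis by (simp add: real_sqrt_divide)
  qed
  have int2: "tail_integrand h2 integrable_on {c..0}" if "- rho h2 \<le> c" for c
    using continuous_on_subset[OF continuous_on_tail_integrand[OF hU2]] that
    by (intro integrable_continuous_interval) auto
  have int1: "tail_integrand h1 integrable_on {- rho h1..0}"
    by (rule integrable_continuous_interval[OF continuous_on_tail_integrand[OF hU1]])
  have "tail_integral h1 + rho h1 * \<delta> = integral {- rho h1..0} (\<lambda>s. tail_integrand h1 s + \<delta>)"
    unfolding tail_integral_def using rho_pos[OF hU1]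
    by (subst integral_add[OF int1 integrable_const_ivl]) auto
  also have "\<dots> \<le> integral {- rho h1..0} (tail_integrand h2)"
    using tail_integrand_growth[OF hU1 h12] int1 int2[of "- rho h1"] rho_le
    by (intro integral_le integrable_add) (auto simp: \<delta>_def)
  finally have "tail_integral h1 + rho h1 * \<delta> \<le> integral {- rho h1..0} (tail_integrand h2)" .
  moreover have "tail_integral h2
      = integral {- rho h2..- rho h1} (tail_integrand h2) + integral {- rho h1..0} (tail_integrand h2)"
    unfolding tail_integral_def using rho_le rho_pos[OF hU1]
    by (intro Henstock_Kurzweil_Integration.integral_combine[symmetric] int2) auto
  moreover have "0 \<le> integral {- rho h2..- rho h1} (tail_integrand h2)"
    using tail_integrand_nonneg[OF hU2] rho_pos[OF hU1] rho_le
    by (intro integral_nonneg integrable_on_subinterval[OF int2[of "- rho h2"]]) auto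
  moreover have "cG * (ln h2 - ln h1) \<le> rho h1 * \<delta>"
    using mult_right_mono[OF rho_half \<delta>] unfolding \<delta>_def by simp
  ultimately show ?thesis by linarith
qed

lemma T_b_eventually_mono: "\<exists>hbar > hstar. mono_on {hbar<..} (T_b a V)"
proof (intro exI conjI)
  define L where "L = U - a"
  define hbar where "hbar = 2 * hmax + (2 * L / cG)^2"
  have hmax_pos: "hmax > 0" unfolding hmax_def using hU_pos by simp
  show "hbar > hstar"
    using hmax_pos zero_le_power2[of "2 * L / cG"] max.cobounded1[of hstar hU]
    unfolding hbar_def hmax_def by linarith
  show "mono_on {hbar<..} (T_b a V)"
  proof (rule mono_onI)
    fix h1 h2 assume "h1 \<in> {hbar<..}" "h2 \<in> {hbar<..}" "h1 \<le> h2"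
    then have "hbar < h1" and "h1 \<le> h2" by auto
    then have h1: "2 * hmax \<le> h1" "(2 * L / cG)^2 \<le> h1 - hmax" "hmax < h1"
      using hmax_pos zero_le_power2[of "2 * L / cG"] unfolding hbar_def by linarith+
    have "head_integral h1 - head_integral h2 \<le> L * (1 / sqrt (h1 - hmax) - 1 / sqrt (h2 - hmax))"
      unfolding L_def by (rule head_integral_decrease[OF h1(3) \<open>h1 \<le> h2\<close>])
    also have "\<dots> \<le> cG * (ln h2 - ln h1)"
      by (rule inverse_sqrt_diff_le_ln_diff[OF hmax_pos cG_pos _ h1(1,2) \<open>h1 \<le> h2\<close>])
        (use a_neg U_pos in \<open>simp add: L_def\<close>)
    also have "\<dots> \<le> tail_integral h2 - tail_integral h1"
      using h1(1) \<open>h1 \<le> h2\<close> unfolding hmax_def by (intro tail_integral_growth) auto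
    finally show "T_b a V h1 \<le> T_b a V h2"
      using T_b_split[OF h1(3)] T_b_split[of h2] h1(3) \<open>h1 \<le> h2\<close> by simp
  qed
qed

end

theorem lemma2p4:
  fixes V V' V'' :: "real \<Rightarrow> real" and a hstar \<beta> :: real
  assumes a_neg: "a < 0"
    and V_deriv: "\<And>u. a < u \<Longrightarrow> (V has_real_derivative V' u) (at u)"
    and V'_deriv: "\<And>u. a < u \<Longrightarrow> (V' has_real_derivative V'' u) (at u)"
    and V''_cont: "continuous_on {a<..} V''"
    and lim_V_a: "(V \<longlongrightarrow> hstar) (at_right a)"
    and hstar_pos: "hstar > 0"
    and lim_V'_a: "filterlim V' at_bot (at_right a)"
    and V0: "V 0 = 0" and V'0: "V' 0 = 0" and V''0: "V'' 0 > 0"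
    and sign: "\<And>u. a < u \<Longrightarrow> u \<noteq> 0 \<Longrightarrow> u * V' u > 0"
    and V_infty: "filterlim V at_top at_top"
    and beta_pos: "\<beta> > 0" and V_beta: "V \<beta> = hstar"
    and ell: "\<exists>l>0. eventually (\<lambda>u. 1 - 2 * V u * V'' u / (V' u)^2 \<ge> l) at_top"
    and ratio: "filterlim (\<lambda>u. u / V' u) at_top at_top"
    and convex: "\<And>u. u > \<beta> \<Longrightarrow> V'' u > 0"
  shows "\<exists>hbar > hstar. mono_on {hbar<..} (ext_period a hstar V)"
proof -
  obtain l N where l: "l > 0" and N: "\<And>u. N \<le> u \<Longrightarrow> l \<le> 1 - 2 * V u * V'' u / (V' u)^2"
    using ell unfolding eventually_at_top_linorder by blast
  interpret potential_well_tail V V' a hstar V'' l "max N 1"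
    using a_neg V_deriv lim_V_a V0 sign V_infty V'_deriv l N by unfold_locales auto
  obtain hbar where "hbar > hstar" and "mono_on {hbar<..} (T_b a V)"
    using T_b_eventually_mono by blast
  moreover from this have "mono_on {hbar<..} (ext_period a hstar V)"
    unfolding mono_on_def ext_period_def by auto
  ultimately show ?thesis by blast
qed

end
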